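(* Let $f\in\mathcal{F}_3$ and $\mathbf{x}\in[0,1]^3$. If $f(1,2)+f(1,3)+f(2,3)\ge1+f(1)+f(2)+f(3)$, there exists an optimal solution $\theta$ of the linear program defining $f^{++}(\mathbf{x})$ with $\theta(\{1,2,3\})\le x_1x_2x_3$ (hence $\theta$ is negatively cylinder dependent: $\sum_{S\supseteq T}\theta(S)\le\prod_{i\in T}x_i$ for all nonempty $T\subseteq[3]$). Otherwise, there exists an optimal solution $\theta$ with $\theta(\{1,2,3\})\ge x_1x_2x_3$ (positively cylinder dependent: $\sum_{S\supseteq T}\theta(S)\ge\prod_{i\in T}x_i$ for all nonempty $T\subseteq[3]$).
   Context: $[n]=\{1,\dots,n\}$. A set function $f:2^{[n]}\to\mathbb{R}_+$ is monotone if $f(S)\le f(T)$ for $S\subseteq T$, submodular if $f(S)+f(T)\ge f(S\cap T)+f(S\cup T)$. $\mathcal{F}_n$ is the set of monotone submodular $f:2^{[n]}\to\mathbb{R}_+$ with $f(\emptyset)=0$, $f([n])=1$. Write $f(i)=f(\{i\})$, $f(i,j)=f(\{i,j\})$. For $\mathbf{x}\in[0,1]^n$, $f^{++}(\mathbf{x})$ is the optimal value of the linear program: maximize $\sum_{S\subseteq[n]}\theta(S)f(S)$ over $\theta:2^{[n]}\to\mathbb{R}_{\ge0}$ with $\sum_S\theta(S)=1$, $\sum_{S\ni i}\theta(S)=x_i$ for all $i$, and $\sum_{S\ni i,j}\theta(S)=x_ix_j$ for all $i<j$. *)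

theory Defs
  imports "HOL-Analysis.Analysis"
begin

text \<open>Ground set [n] = {1..n}; set functions are functions on nat set, considered on Pow {1..n}.\<close>

definition in_F :: "nat \<Rightarrow> (nat set \<Rightarrow> real) \<Rightarrow> bool" where
  "in_F n f \<longleftrightarrow>
     (\<forall>S \<subseteq> {1..n}. f S \<ge> 0) \<and>
     (\<forall>S T. S \<subseteq> T \<and> T \<subseteq> {1..n} \<longrightarrow> f S \<le> f T) \<and>
     (\<forall>S T. S \<subseteq> {1..n} \<and> T \<subseteq> {1..n} \<longrightarrow> f S + f T \<ge> f (S \<inter> T) + f (S \<union> T)) \<and>
     f {} = 0 \<and> f {1..n} = 1"

definition lp_feasible :: "nat \<Rightarrow> (nat \<Rightarrow> real) \<Rightarrow> (nat set \<Rightarrow> real) \<Rightarrow> bool" where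
  "lp_feasible n x \<theta> \<longleftrightarrow>
     (\<forall>S \<subseteq> {1..n}. \<theta> S \<ge> 0) \<and>
     (\<Sum>S\<in>Pow {1..n}. \<theta> S) = 1 \<and>
     (\<forall>i\<in>{1..n}. (\<Sum>S\<in>{S\<in>Pow {1..n}. i \<in> S}. \<theta> S) = x i) \<and>
     (\<forall>i\<in>{1..n}. \<forall>j\<in>{1..n}. i < j \<longrightarrow>
        (\<Sum>S\<in>{S\<in>Pow {1..n}. i \<in> S \<and> j \<in> S}. \<theta> S) = x i * x j)"

definition lp_value :: "nat \<Rightarrow> (nat set \<Rightarrow> real) \<Rightarrow> (nat set \<Rightarrow> real) \<Rightarrow> real" where
  "lp_value n f \<theta> = (\<Sum>S\<in>Pow {1..n}. \<theta> S * f S)"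

definition lp_optimal :: "nat \<Rightarrow> (nat set \<Rightarrow> real) \<Rightarrow> (nat \<Rightarrow> real) \<Rightarrow> (nat set \<Rightarrow> real) \<Rightarrow> bool" where
  "lp_optimal n f x \<theta> \<longleftrightarrow> lp_feasible n x \<theta> \<and>
     (\<forall>\<theta>'. lp_feasible n x \<theta>' \<longrightarrow> lp_value n f \<theta>' \<le> lp_value n f \<theta>)"

definition neg_cylinder_dep :: "nat \<Rightarrow> (nat \<Rightarrow> real) \<Rightarrow> (nat set \<Rightarrow> real) \<Rightarrow> bool" where
  "neg_cylinder_dep n x \<theta> \<longleftrightarrow> (\<forall>T \<subseteq> {1..n}. T \<noteq> {} \<longrightarrow>
     (\<Sum>S\<in>{S\<in>Pow {1..n}. T \<subseteq> S}. \<theta> S) \<le> (\<Prod>i\<in>T. x i))"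

definition pos_cylinder_dep :: "nat \<Rightarrow> (nat \<Rightarrow> real) \<Rightarrow> (nat set \<Rightarrow> real) \<Rightarrow> bool" where
  "pos_cylinder_dep n x \<theta> \<longleftrightarrow> (\<forall>T \<subseteq> {1..n}. T \<noteq> {} \<longrightarrow>
     (\<Sum>S\<in>{S\<in>Pow {1..n}. T \<subseteq> S}. \<theta> S) \<ge> (\<Prod>i\<in>T. x i))"

end

theory Submission
  imports Defs
begin

text \<open>
  For n = 3 the seven equality constraints of the LP determine every feasible \<theta> by the single
  parameter t = \<theta>({1,2,3}), and feasibility amounts to t lying in an interval [lo, hi].
  The objective is affine in t with slope f([3]) - \<Sigma>|S|=2 f(S) + \<Sigma>|S|=1 f(S) - f(\<emptyset>),
  so an endpoint of the interval is optimal: lo if the slope is \<le> 0, hi otherwise.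
  The product distribution t = x1 x2 x3 is feasible, hence lo \<le> x1 x2 x3 \<le> hi.
  Since the cylinder sums over singletons and pairs are fixed by the constraints,
  cylinder dependence reduces to comparing t with x1 x2 x3.
  Only f(\<emptyset>) = 0 and f([3]) = 1 are used.
\<close>

lemma atLeastAtMost_1_3: "{1..3::nat} = {1,2,3}"
  by auto

lemma Pow_1_3: "Pow {1..3::nat} = {{},{1},{2},{3},{1,2},{1,3},{2,3},{1,2,3}}"
  unfolding atLeastAtMost_1_3 by (auto simp: Pow_insert insert_commute)

lemma subsets_1_3_distinct:
  "{1,2} \<noteq> ({1,3}::nat set)" "{1,2} \<noteq> ({2,3}::nat set)" "{1,2} \<noteq> ({1,2,3}::nat set)"
  "{1,3} \<noteq> ({2,3}::nat set)" "{1,3} \<noteq> ({1,2,3}::nat set)" "{2,3} \<noteq> ({1,2,3}::nat set)"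
proof -
  have "2 \<notin> ({1,3}::nat set)" "1 \<notin> ({2,3}::nat set)" "3 \<notin> ({1,2}::nat set)"
    by simp_all
  then show "{1,2} \<noteq> ({1,3}::nat set)" "{1,2} \<noteq> ({2,3}::nat set)" "{1,2} \<noteq> ({1,2,3}::nat set)"
    "{1,3} \<noteq> ({2,3}::nat set)" "{1,3} \<noteq> ({1,2,3}::nat set)" "{2,3} \<noteq> ({1,2,3}::nat set)"
    by blast+
qed

lemma sum_Pow_1_3:
  "(\<Sum>S\<in>Pow {1..3::nat}. g S) =
     g {} + g {1} + g {2} + g {3} + g {1,2} + g {1,3} + g {2,3} + g {1,2,3}"
  using subsets_1_3_distinct unfolding Pow_1_3 by (simp add: ac_simps)

lemma sum_filter_Pow_1_3:
  fixes g :: "nat set \<Rightarrow> real"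
  shows "(\<Sum>S\<in>{S\<in>Pow {1..3::nat}. P S}. g S) =
     (if P {} then g {} else 0) + (if P {1} then g {1} else 0) + (if P {2} then g {2} else 0)
     + (if P {3} then g {3} else 0) + (if P {1,2} then g {1,2} else 0)
     + (if P {1,3} then g {1,3} else 0) + (if P {2,3} then g {2,3} else 0)
     + (if P {1,2,3} then g {1,2,3} else 0)"
proof -
  have "(\<Sum>S\<in>{S\<in>Pow {1..3::nat}. P S}. g S) = (\<Sum>S\<in>Pow {1..3}. if P S then g S else 0)"
    by (rule sum.inter_filter) simp
  then show ?thesis
    by (simp only: sum_Pow_1_3)
qed

lemma lp_feasible_3_iff:
  "lp_feasible 3 x \<theta> \<longleftrightarrow>
     \<theta> {} \<ge> 0 \<and> \<theta> {1} \<ge> 0 \<and> \<theta> {2} \<ge> 0 \<and> \<theta> {3} \<ge> 0 \<and>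
     \<theta> {1,2} \<ge> 0 \<and> \<theta> {1,3} \<ge> 0 \<and> \<theta> {2,3} \<ge> 0 \<and> \<theta> {1,2,3} \<ge> 0 \<and>
     \<theta> {} + \<theta> {1} + \<theta> {2} + \<theta> {3} + \<theta> {1,2} + \<theta> {1,3} + \<theta> {2,3} + \<theta> {1,2,3} = 1 \<and>
     \<theta> {1} + \<theta> {1,2} + \<theta> {1,3} + \<theta> {1,2,3} = x 1 \<and>
     \<theta> {2} + \<theta> {1,2} + \<theta> {2,3} + \<theta> {1,2,3} = x 2 \<and>
     \<theta> {3} + \<theta> {1,3} + \<theta> {2,3} + \<theta> {1,2,3} = x 3 \<and>
     \<theta> {1,2} + \<theta> {1,2,3} = x 1 * x 2 \<and>
     \<theta> {1,3} + \<theta> {1,2,3} = x 1 * x 3 \<and>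
     \<theta> {2,3} + \<theta> {1,2,3} = x 2 * x 3"
proof -
  have singletons: "(\<forall>i\<in>{1..3::nat}. P i) \<longleftrightarrow> P 1 \<and> P 2 \<and> P 3" for P
    unfolding atLeastAtMost_1_3 by auto
  have pairs: "(\<forall>i\<in>{1..3::nat}. \<forall>j\<in>{1..3}. i < j \<longrightarrow> Q i j) \<longleftrightarrow> Q 1 2 \<and> Q 1 3 \<and> Q 2 3" for Q
    unfolding atLeastAtMost_1_3 by auto
  have subsets: "(\<forall>S\<subseteq>{1..3::nat}. R S) \<longleftrightarrow> (\<forall>S\<in>Pow {1..3}. R S)" for R
    by auto
  show ?thesis
    unfolding lp_feasible_def singletons pairs subsets sum_filter_Pow_1_3 sum_Pow_1_3
    unfolding Pow_1_3 by (simp add: ac_simps)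
qed

lemma lp_feasible_3_marginals:
  assumes "lp_feasible 3 x \<theta>"
  shows "\<theta> {1} + \<theta> {1,2} + \<theta> {1,3} + \<theta> {1,2,3} = x 1"
    "\<theta> {2} + \<theta> {1,2} + \<theta> {2,3} + \<theta> {1,2,3} = x 2"
    "\<theta> {3} + \<theta> {1,3} + \<theta> {2,3} + \<theta> {1,2,3} = x 3"
    "\<theta> {1,2} + \<theta> {1,2,3} = x 1 * x 2"
    "\<theta> {1,3} + \<theta> {1,2,3} = x 1 * x 3"
    "\<theta> {2,3} + \<theta> {1,2,3} = x 2 * x 3"
  using assms unfolding lp_feasible_3_iff by blast+

lemma lp_feasible_3_values:
  assumes "lp_feasible 3 x \<theta>"
  shows "\<theta> {1,2} = x 1 * x 2 - \<theta> {1,2,3}" "\<theta> {1,3} = x 1 * x 3 - \<theta> {1,2,3}"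
    "\<theta> {2,3} = x 2 * x 3 - \<theta> {1,2,3}"
    "\<theta> {1} = x 1 - x 1 * x 2 - x 1 * x 3 + \<theta> {1,2,3}"
    "\<theta> {2} = x 2 - x 1 * x 2 - x 2 * x 3 + \<theta> {1,2,3}"
    "\<theta> {3} = x 3 - x 1 * x 3 - x 2 * x 3 + \<theta> {1,2,3}"
    "\<theta> {} = 1 - x 1 - x 2 - x 3 + x 1 * x 2 + x 1 * x 3 + x 2 * x 3 - \<theta> {1,2,3}"
  using assms unfolding lp_feasible_3_iff by linarith+

text \<open>The last branch covers {} and every set outside Pow {1..3}, which the LP never inspects.\<close>

definition lp_solution_3 :: "(nat \<Rightarrow> real) \<Rightarrow> real \<Rightarrow> nat set \<Rightarrow> real" where
  "lp_solution_3 x t = (\<lambda>S.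
     if S = {1,2,3} then t
     else if S = {1,2} then x 1 * x 2 - t
     else if S = {1,3} then x 1 * x 3 - t
     else if S = {2,3} then x 2 * x 3 - t
     else if S = {1} then x 1 - x 1 * x 2 - x 1 * x 3 + t
     else if S = {2} then x 2 - x 1 * x 2 - x 2 * x 3 + t
     else if S = {3} then x 3 - x 1 * x 3 - x 2 * x 3 + t
     else 1 - x 1 - x 2 - x 3 + x 1 * x 2 + x 1 * x 3 + x 2 * x 3 - t)"

lemma lp_solution_3_simps:
  "lp_solution_3 x t {1,2,3} = t"
  "lp_solution_3 x t {1,2} = x 1 * x 2 - t"
  "lp_solution_3 x t {1,3} = x 1 * x 3 - t"
  "lp_solution_3 x t {2,3} = x 2 * x 3 - t"
  "lp_solution_3 x t {1} = x 1 - x 1 * x 2 - x 1 * x 3 + t"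
  "lp_solution_3 x t {2} = x 2 - x 1 * x 2 - x 2 * x 3 + t"
  "lp_solution_3 x t {3} = x 3 - x 1 * x 3 - x 2 * x 3 + t"
  "lp_solution_3 x t {} = 1 - x 1 - x 2 - x 3 + x 1 * x 2 + x 1 * x 3 + x 2 * x 3 - t"
  unfolding lp_solution_3_def using subsets_1_3_distinct
  by (simp_all add: eq_commute[of "{1,2,3}"] eq_commute[of "{1,2}"]
      eq_commute[of "{1,3}"] eq_commute[of "{2,3}"])

definition lp_lower_3 :: "(nat \<Rightarrow> real) \<Rightarrow> real" where
  "lp_lower_3 x = max 0 (max (x 1 * x 2 + x 1 * x 3 - x 1)
     (max (x 1 * x 2 + x 2 * x 3 - x 2) (x 1 * x 3 + x 2 * x 3 - x 3)))"

definition lp_upper_3 :: "(nat \<Rightarrow> real) \<Rightarrow> real" where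
  "lp_upper_3 x = min (x 1 * x 2) (min (x 1 * x 3)
     (min (x 2 * x 3) (1 - x 1 - x 2 - x 3 + x 1 * x 2 + x 1 * x 3 + x 2 * x 3)))"

lemma lp_feasible_3_bounds:
  assumes "lp_feasible 3 x \<theta>"
  shows "lp_lower_3 x \<le> \<theta> {1,2,3}" and "\<theta> {1,2,3} \<le> lp_upper_3 x"
  using assms unfolding lp_feasible_3_iff lp_lower_3_def lp_upper_3_def by auto

lemma lp_feasible_solution_3:
  assumes "lp_lower_3 x \<le> t" and "t \<le> lp_upper_3 x"
  shows "lp_feasible 3 x (lp_solution_3 x t)"
  using assms unfolding lp_feasible_3_iff lp_solution_3_simps lp_lower_3_def lp_upper_3_def
  by auto

text \<open>Each bound is the nonnegativity of one atom of the product distribution.\<close>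

lemma product_within_lp_bounds_3:
  assumes "\<forall>i\<in>{1..3}. 0 \<le> x i \<and> x i \<le> 1"
  shows "lp_lower_3 x \<le> x 1 * x 2 * x 3" and "x 1 * x 2 * x 3 \<le> lp_upper_3 x"
proof -
  have x: "0 \<le> x 1" "x 1 \<le> 1" "0 \<le> x 2" "x 2 \<le> 1" "0 \<le> x 3" "x 3 \<le> 1"
    using assms by auto
  have "0 \<le> x 1 * (1 - x 2) * (1 - x 3)" "0 \<le> (1 - x 1) * x 2 * (1 - x 3)"
    "0 \<le> (1 - x 1) * (1 - x 2) * x 3" "0 \<le> (1 - x 1) * (1 - x 2) * (1 - x 3)"
    "0 \<le> x 1 * x 2 * (1 - x 3)" "0 \<le> x 1 * (1 - x 2) * x 3" "0 \<le> (1 - x 1) * x 2 * x 3"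
    "0 \<le> x 1 * x 2 * x 3"
    using x by simp_all
  then show "lp_lower_3 x \<le> x 1 * x 2 * x 3" and "x 1 * x 2 * x 3 \<le> lp_upper_3 x"
    unfolding lp_lower_3_def lp_upper_3_def by (simp_all add: algebra_simps)
qed

definition interaction_3 :: "(nat set \<Rightarrow> real) \<Rightarrow> real" where
  "interaction_3 f = f {1,2,3} - f {1,2} - f {1,3} - f {2,3} + f {1} + f {2} + f {3} - f {}"

lemma lp_value_3_diff:
  assumes "lp_feasible 3 x \<theta>" and "lp_feasible 3 x \<theta>'"
  shows "lp_value 3 f \<theta>' - lp_value 3 f \<theta> = (\<theta>' {1,2,3} - \<theta> {1,2,3}) * interaction_3 f"
  unfolding lp_value_def sum_Pow_1_3 lp_feasible_3_values[OF assms(1)]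
    lp_feasible_3_values[OF assms(2)] interaction_3_def
  by (simp add: algebra_simps)

lemma lp_optimal_3_if_extreme:
  assumes "lp_feasible 3 x \<theta>"
    and "\<And>\<theta>'. lp_feasible 3 x \<theta>' \<Longrightarrow> (\<theta>' {1,2,3} - \<theta> {1,2,3}) * interaction_3 f \<le> 0"
  shows "lp_optimal 3 f x \<theta>"
  unfolding lp_optimal_def
proof (intro conjI allI impI assms(1))
  fix \<theta>' assume feasible: "lp_feasible 3 x \<theta>'"
  have "lp_value 3 f \<theta>' - lp_value 3 f \<theta> = (\<theta>' {1,2,3} - \<theta> {1,2,3}) * interaction_3 f"
    by (rule lp_value_3_diff[OF assms(1) feasible])
  also have "\<dots> \<le> 0"
    by (rule assms(2)[OF feasible])
  finally show "lp_value 3 f \<theta>' \<le> lp_value 3 f \<theta>"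
    by simp
qed

lemma lp_optimal_3_lower:
  assumes "\<forall>i\<in>{1..3}. 0 \<le> x i \<and> x i \<le> 1" and "interaction_3 f \<le> 0"
  shows "lp_optimal 3 f x (lp_solution_3 x (lp_lower_3 x))"
proof (rule lp_optimal_3_if_extreme)
  show "lp_feasible 3 x (lp_solution_3 x (lp_lower_3 x))"
    using product_within_lp_bounds_3[OF assms(1)] by (intro lp_feasible_solution_3) simp_all
  fix \<theta>' assume "lp_feasible 3 x \<theta>'"
  then have "lp_lower_3 x \<le> \<theta>' {1,2,3}"
    by (rule lp_feasible_3_bounds(1))
  then show "(\<theta>' {1,2,3} - lp_solution_3 x (lp_lower_3 x) {1,2,3}) * interaction_3 f \<le> 0"
    using assms(2) unfolding lp_solution_3_simps by (simp add: mult_nonneg_nonpos)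
qed

lemma lp_optimal_3_upper:
  assumes "\<forall>i\<in>{1..3}. 0 \<le> x i \<and> x i \<le> 1" and "interaction_3 f \<ge> 0"
  shows "lp_optimal 3 f x (lp_solution_3 x (lp_upper_3 x))"
proof (rule lp_optimal_3_if_extreme)
  show "lp_feasible 3 x (lp_solution_3 x (lp_upper_3 x))"
    using product_within_lp_bounds_3[OF assms(1)] by (intro lp_feasible_solution_3) simp_all
  fix \<theta>' assume "lp_feasible 3 x \<theta>'"
  then have "\<theta>' {1,2,3} \<le> lp_upper_3 x"
    by (rule lp_feasible_3_bounds(2))
  then show "(\<theta>' {1,2,3} - lp_solution_3 x (lp_upper_3 x) {1,2,3}) * interaction_3 f \<le> 0"
    using assms(2) unfolding lp_solution_3_simps by (simp add: mult_nonpos_nonneg)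
qed

lemma cylinder_sums_3:
  fixes \<theta> :: "nat set \<Rightarrow> real"
  shows "(\<forall>T\<subseteq>{1..3::nat}. T \<noteq> {} \<longrightarrow> R (\<Sum>S\<in>{S\<in>Pow {1..3}. T \<subseteq> S}. \<theta> S) (\<Prod>i\<in>T. x i))
    \<longleftrightarrow> R (\<theta> {1} + \<theta> {1,2} + \<theta> {1,3} + \<theta> {1,2,3}) (x 1) \<and>
        R (\<theta> {2} + \<theta> {1,2} + \<theta> {2,3} + \<theta> {1,2,3}) (x 2) \<and>
        R (\<theta> {3} + \<theta> {1,3} + \<theta> {2,3} + \<theta> {1,2,3}) (x 3) \<and>
        R (\<theta> {1,2} + \<theta> {1,2,3}) (x 1 * x 2) \<and>
        R (\<theta> {1,3} + \<theta> {1,2,3}) (x 1 * x 3) \<and>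
        R (\<theta> {2,3} + \<theta> {1,2,3}) (x 2 * x 3) \<and>
        R (\<theta> {1,2,3}) (x 1 * x 2 * x 3)"
proof -
  have "(\<forall>T\<subseteq>{1..3::nat}. T \<noteq> {} \<longrightarrow> Q T) \<longleftrightarrow>
      Q {1} \<and> Q {2} \<and> Q {3} \<and> Q {1,2} \<and> Q {1,3} \<and> Q {2,3} \<and> Q {1,2,3}" for Q
  proof -
    have "(\<forall>T\<subseteq>{1..3::nat}. T \<noteq> {} \<longrightarrow> Q T) \<longleftrightarrow> (\<forall>T\<in>Pow {1..3}. T \<noteq> {} \<longrightarrow> Q T)"
      by blast
    then show ?thesis
      unfolding Pow_1_3 by auto
  qed
  then show ?thesis
    unfolding sum_filter_Pow_1_3 using subsets_1_3_distinct by (simp add: ac_simps)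
qed

lemma neg_cylinder_dep_3_iff:
  assumes "lp_feasible 3 x \<theta>"
  shows "neg_cylinder_dep 3 x \<theta> \<longleftrightarrow> \<theta> {1,2,3} \<le> x 1 * x 2 * x 3"
  unfolding neg_cylinder_dep_def cylinder_sums_3 lp_feasible_3_marginals[OF assms] by simp

lemma pos_cylinder_dep_3_iff:
  assumes "lp_feasible 3 x \<theta>"
  shows "pos_cylinder_dep 3 x \<theta> \<longleftrightarrow> \<theta> {1,2,3} \<ge> x 1 * x 2 * x 3"
  unfolding pos_cylinder_dep_def cylinder_sums_3[where R="\<lambda>a b. b \<le> a"]
    lp_feasible_3_marginals[OF assms] by simp

theorem mainTheorem8:
  fixes f :: "nat set \<Rightarrow> real" and x :: "nat \<Rightarrow> real"
  assumes "in_F 3 f"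
    and "\<forall>i\<in>{1..3}. 0 \<le> x i \<and> x i \<le> 1"
  shows "(f {1,2} + f {1,3} + f {2,3} \<ge> 1 + f {1} + f {2} + f {3} \<longrightarrow>
            (\<exists>\<theta>. lp_optimal 3 f x \<theta> \<and> \<theta> {1,2,3} \<le> x 1 * x 2 * x 3
                 \<and> neg_cylinder_dep 3 x \<theta>))
       \<and> (\<not> (f {1,2} + f {1,3} + f {2,3} \<ge> 1 + f {1} + f {2} + f {3}) \<longrightarrow>
            (\<exists>\<theta>. lp_optimal 3 f x \<theta> \<and> \<theta> {1,2,3} \<ge> x 1 * x 2 * x 3
                 \<and> pos_cylinder_dep 3 x \<theta>))"
proof -
  have "f {} = 0" and "f {1,2,3} = 1"
    using assms(1) unfolding in_F_def atLeastAtMost_1_3 by auto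
  then have interaction:
    "interaction_3 f = 1 + f {1} + f {2} + f {3} - (f {1,2} + f {1,3} + f {2,3})"
    unfolding interaction_3_def by simp
  note bounds = product_within_lp_bounds_3[OF assms(2)]
  show ?thesis
  proof (intro conjI impI)
    assume "f {1,2} + f {1,3} + f {2,3} \<ge> 1 + f {1} + f {2} + f {3}"
    then have "lp_optimal 3 f x (lp_solution_3 x (lp_lower_3 x))"
      using assms(2) interaction by (intro lp_optimal_3_lower) simp_all
    then show "\<exists>\<theta>. lp_optimal 3 f x \<theta> \<and> \<theta> {1,2,3} \<le> x 1 * x 2 * x 3 \<and> neg_cylinder_dep 3 x \<theta>"
      using bounds neg_cylinder_dep_3_iff lp_optimal_def lp_solution_3_simps(1) by metis
  next
    assume "\<not> (f {1,2} + f {1,3} + f {2,3} \<ge> 1 + f {1} + f {2} + f {3})"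
    then have "lp_optimal 3 f x (lp_solution_3 x (lp_upper_3 x))"
      using assms(2) interaction by (intro lp_optimal_3_upper) simp_all
    then show "\<exists>\<theta>. lp_optimal 3 f x \<theta> \<and> \<theta> {1,2,3} \<ge> x 1 * x 2 * x 3 \<and> pos_cylinder_dep 3 x \<theta>"
      using bounds pos_cylinder_dep_3_iff lp_optimal_def lp_solution_3_simps(1) by metis
  qed
qed

end
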